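(* Let $x$ and $y$ be two infinite words over a finite alphabet $A$. Suppose there are symbols $c,c',d\in A$ and an increasing sequence of integers $(m_n)_{n\ge0}$ such that the limits $$\lim_{n\to\infty}\frac{|\{1\le i\le m_n: x[i]=c,\ y[i]=d\}|}{m_n}\quad\text{and}\quad \lim_{n\to\infty}\frac{|\{1\le i\le m_n: x[i]=c',\ y[i]=d\}|}{m_n}$$ exist and are different. Then $\rho(x/y)<1$.
   Context: $x[i]$ is the symbol at position $i$ (positions start at 1). A $k$-automaton $\langle Q,A,\delta,I\rangle$ has finite state set $Q$, transitions $\delta\subseteq Q\times(A\cup\{\varepsilon\})^k\times Q$, initial states $I$; an infinite run is accepting if it starts in $I$ and all label components are infinite. It is $2$-deterministic if $I$ is a singleton and, for two transitions from the same state with labels $(\alpha_i),(\alpha'_i)$, $\alpha_j=\varepsilon$ for some $j\le2$ implies $\alpha'_j=\varepsilon$, and $\alpha_1=\alpha'_1,\alpha_2=\alpha'_2$ implies $\alpha_3=\alpha'_3$ and equal targets. A compressor is a $2$-deterministic $3$-automaton $\mathcal C$ (input $x$, oracle $y$, output) such that for each fixed $y$ the map $x\mapsto\mathcal C(x,y)$ is injective. For the accepting run $q_0\xrightarrow{\alpha_1,\beta_1|w_1}q_1\cdots$ with $x=\alpha_1\alpha_2\cdots$, $y=\beta_1\beta_2\cdots$, $\rho_{\mathcal C}(x/y)=\liminf_n|w_1\cdots w_n|/|\alpha_1\cdots\alpha_n|$; $\rho(x/y)$ is the infimum over all compressors. *)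

theory Defs
  imports "HOL-Analysis.Analysis" "HOL-Library.Infinite_Set"
begin

text \<open>Labels of a 3-automaton: each component is a symbol or epsilon (None).\<close>
type_synonym 'a lab3 = "'a option \<times> 'a option \<times> 'a option"

text \<open>A 3-automaton over alphabet A; states are encoded as natural numbers
  (any finite state set can be so encoded).\<close>
record 'a aut3 =
  states :: "nat set"
  trans  :: "(nat \<times> 'a lab3 \<times> nat) set"
  init   :: "nat set"

definition opt_ok :: "'a set \<Rightarrow> 'a option \<Rightarrow> bool" where
  "opt_ok A o' \<longleftrightarrow> (case o' of None \<Rightarrow> True | Some a \<Rightarrow> a \<in> A)"

definition is_aut3 :: "'a set \<Rightarrow> 'a aut3 \<Rightarrow> bool" where
  "is_aut3 A M \<longleftrightarrow> finite (states M) \<and> init M \<subseteq> states M \<and>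
     (\<forall>p l q. (p, l, q) \<in> trans M \<longrightarrow>
        p \<in> states M \<and> q \<in> states M \<and>
        opt_ok A (fst l) \<and> opt_ok A (fst (snd l)) \<and> opt_ok A (snd (snd l)))"

definition two_det :: "'a aut3 \<Rightarrow> bool" where
  "two_det M \<longleftrightarrow> (\<exists>q0. init M = {q0}) \<and>
     (\<forall>p a1 a2 a3 q b1 b2 b3 q'.
        (p, (a1, a2, a3), q) \<in> trans M \<longrightarrow> (p, (b1, b2, b3), q') \<in> trans M \<longrightarrow>
          (a1 = None \<longrightarrow> b1 = None) \<and> (a2 = None \<longrightarrow> b2 = None) \<and>
          (a1 = b1 \<and> a2 = b2 \<longrightarrow> a3 = b3 \<and> q = q'))"

text \<open>Infinite word (0-indexed) obtained by concatenating the non-epsilon entries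
  of a sequence of labels.\<close>
definition opt_word :: "(nat \<Rightarrow> 'a option) \<Rightarrow> nat \<Rightarrow> 'a" where
  "opt_word s j = the (s (enumerate {n. s n \<noteq> None} j))"

definition opt_len :: "(nat \<Rightarrow> 'a option) \<Rightarrow> nat \<Rightarrow> nat" where
  "opt_len s n = card {i. i < n \<and> s i \<noteq> None}"

definition comp1 :: "(nat \<Rightarrow> 'a lab3) \<Rightarrow> nat \<Rightarrow> 'a option" where
  "comp1 ls n = fst (ls n)"
definition comp2 :: "(nat \<Rightarrow> 'a lab3) \<Rightarrow> nat \<Rightarrow> 'a option" where
  "comp2 ls n = fst (snd (ls n))"
definition comp3 :: "(nat \<Rightarrow> 'a lab3) \<Rightarrow> nat \<Rightarrow> 'a option" where
  "comp3 ls n = snd (snd (ls n))"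

definition accepting :: "'a aut3 \<Rightarrow> (nat \<Rightarrow> nat) \<Rightarrow> (nat \<Rightarrow> 'a lab3) \<Rightarrow> bool" where
  "accepting M qs ls \<longleftrightarrow> qs 0 \<in> init M \<and> (\<forall>n. (qs n, ls n, qs (Suc n)) \<in> trans M) \<and>
     infinite {n. comp1 ls n \<noteq> None} \<and> infinite {n. comp2 ls n \<noteq> None} \<and>
     infinite {n. comp3 ls n \<noteq> None}"

definition compressor :: "'a set \<Rightarrow> 'a aut3 \<Rightarrow> bool" where
  "compressor A M \<longleftrightarrow> is_aut3 A M \<and> two_det M \<and>
     (\<forall>qs ls qs' ls'. accepting M qs ls \<longrightarrow> accepting M qs' ls' \<longrightarrow>
        opt_word (comp2 ls) = opt_word (comp2 ls') \<longrightarrow>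
        opt_word (comp3 ls) = opt_word (comp3 ls') \<longrightarrow>
        opt_word (comp1 ls) = opt_word (comp1 ls'))"

definition run_ratio :: "(nat \<Rightarrow> 'a lab3) \<Rightarrow> ereal" where
  "run_ratio ls = liminf (\<lambda>n. ereal (real (opt_len (comp3 ls) n) / real (opt_len (comp1 ls) n)))"

text \<open>rho(x/y): infimum over compressors of the ratio of the accepting run on (x,y)
  (unique by 2-determinism).\<close>
definition rho :: "'a set \<Rightarrow> (nat \<Rightarrow> 'a) \<Rightarrow> (nat \<Rightarrow> 'a) \<Rightarrow> ereal" where
  "rho A x y = Inf {run_ratio ls | M qs ls. compressor A M \<and> accepting M qs ls \<and>
       opt_word (comp1 ls) = x \<and> opt_word (comp2 ls) = y}"

end

theory Submission
  imports Defs
begin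

text \<open>
  Cut x and y into blocks of length l and call an input block v good for the oracle block u if
  its score, the number of positions where (v, u) reads (c, d) minus the number where it reads
  (c', d), is at least h. By a Chernoff bound there are, for suitable l, h and t, fewer good
  blocks than words of length l - t not starting with c. So a compressor can code good blocks
  by such words and every other block v by c # v, of length l + 1. Along the prefixes of
  length m n the score of (x, y) grows like (L - L') m n, so infinitely often a fraction of
  about (L - L')/2 of the blocks is good; each of them saves t + 1 symbols, which outweighs
  the one symbol lost on every other block when t is large.\<close>

lemma card_less_Suc_filter:
  "card {i. i < Suc n \<and> P i} = card {i. i < n \<and> P i} + (if P n then 1 else 0)"
proof -
  have "{i. i < Suc n \<and> P i} = {i. i < n \<and> P i} \<union> (if P n then {n} else {})"
    by (auto simp: less_Suc_eq)
  then show ?thesis by (auto simp: card_insert_if)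
qed

lemma opt_len_Suc: "opt_len s (Suc n) = opt_len s n + (if s n = None then 0 else 1)"
  unfolding opt_len_def by (simp add: card_less_Suc_filter)

lemma opt_len_0 [simp]: "opt_len s 0 = 0"
  by (simp add: opt_len_def)

lemma enumerate_card_less:
  fixes S :: "nat set"
  assumes S: "infinite S" and n: "n \<in> S"
  shows "enumerate S (card {m\<in>S. m < n}) = n"
proof -
  obtain i where i: "enumerate S i = n" using enumerate_Ex[OF S n] by blast
  have "{m\<in>S. m < n} = enumerate S ` {..<i}"
  proof
    show "{m\<in>S. m < n} \<subseteq> enumerate S ` {..<i}"
    proof
      fix m assume m: "m \<in> {m\<in>S. m < n}"
      then obtain j where j: "enumerate S j = m" using enumerate_Ex[OF S] by blast
      then have "j < i" using m i S by (metis enumerate_mono_iff mem_Collect_eq)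
      then show "m \<in> enumerate S ` {..<i}" using j by auto
    qed
    show "enumerate S ` {..<i} \<subseteq> {m\<in>S. m < n}"
      using i S enumerate_in_set by auto
  qed
  moreover have "card (enumerate S ` {..<i}) = i"
    using inj_enumerate[OF S] by (simp add: card_image inj_on_subset)
  ultimately show ?thesis using i by simp
qed

lemma opt_word_opt_len:
  assumes "infinite {n. s n \<noteq> None}" and "s n \<noteq> None"
  shows "opt_word s (opt_len s n) = the (s n)"
proof -
  have "opt_len s n = card {m\<in>{n. s n \<noteq> None}. m < n}"
    unfolding opt_len_def by (rule arg_cong[where f=card]) auto
  then show ?thesis
    unfolding opt_word_def using enumerate_card_less[OF assms(1)] assms(2) by simp
qed

section \<open>A Chernoff bound for block scores\<close>

lemma sum_lists_length_prod:
  assumes "finite A"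
  shows "(\<Sum>v\<in>{v. set v \<subseteq> A \<and> length v = n}. \<Prod>j<n. F j (v!j)) = (\<Prod>j<n. \<Sum>a\<in>A. (F j a :: real))"
proof (induction n arbitrary: F)
  case 0
  have "{v. set v \<subseteq> A \<and> length v = 0} = {[]}" by auto
  then show ?case by simp
next
  case (Suc n)
  let ?L = "{v. set v \<subseteq> A \<and> length v = n}"
  have inj: "inj_on (\<lambda>(v, a). a # v) (?L \<times> A)" by (auto simp: inj_on_def)
  have "(\<Sum>v\<in>{v. set v \<subseteq> A \<and> length v = Suc n}. \<Prod>j<Suc n. F j (v!j))
      = (\<Sum>p\<in>?L \<times> A. \<Prod>j<Suc n. F j ((snd p # fst p)!j))"
    unfolding lists_length_Suc_eq by (subst sum.reindex[OF inj]) (simp add: case_prod_beta)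
  also have "\<dots> = (\<Sum>p\<in>?L \<times> A. F 0 (snd p) * (\<Prod>j<n. F (Suc j) (fst p ! j)))"
    by (subst prod.lessThan_Suc_shift) simp
  also have "\<dots> = (\<Sum>a\<in>A. F 0 a) * (\<Sum>v\<in>?L. \<Prod>j<n. F (Suc j) (v ! j))"
    by (simp add: sum.cartesian_product case_prod_beta sum_distrib_left sum_distrib_right
        mult.commute)
  also have "\<dots> = (\<Prod>j<Suc n. \<Sum>a\<in>A. F j a)"
    using Suc.IH[of "\<lambda>j. F (Suc j)"] by (subst prod.lessThan_Suc_shift) simp
  finally show ?case .
qed

lemma card_lists_hd_not:
  assumes "finite A" "c \<in> A"
  shows "card {w. set w \<subseteq> A \<and> length w = Suc r \<and> hd w \<noteq> c} = (card A - 1) * card A ^ r"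
proof -
  let ?L = "{v. set v \<subseteq> A \<and> length v = r}"
  have "{w. set w \<subseteq> A \<and> length w = Suc r \<and> hd w \<noteq> c} = (\<lambda>(a, v). a # v) ` ((A - {c}) \<times> ?L)"
    by (auto simp: length_Suc_conv)
  moreover have "inj_on (\<lambda>(a, v). a # v) ((A - {c}) \<times> ?L)" by (auto simp: inj_on_def)
  ultimately show ?thesis
    using assms by (simp add: card_image card_cartesian_product card_lists_length_eq)
qed

definition score :: "'a \<Rightarrow> 'a \<Rightarrow> 'a \<Rightarrow> 'a \<Rightarrow> 'a \<Rightarrow> real" where
  "score c c' d b a = (if b = d \<and> a = c then 1 else if b = d \<and> a = c' then -1 else 0)"

definition block_score :: "'a \<Rightarrow> 'a \<Rightarrow> 'a \<Rightarrow> 'a list \<Rightarrow> 'a list \<Rightarrow> real" where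
  "block_score c c' d u v = (\<Sum>j<length u. score c c' d (u!j) (v!j))"

lemma two_le_card:
  assumes "finite A" "c \<in> A" "c' \<in> A" "c \<noteq> c'"
  shows "card A \<ge> 2"
proof -
  have "card {c, c'} \<le> card A" using assms card_mono[of A "{c, c'}"] by auto
  then show ?thesis using assms(4) by simp
qed

lemma sum_powr_score_le:
  assumes A: "finite A" "c \<in> A" "c' \<in> A" "c \<noteq> c'" and z: "z \<ge> 1"
  shows "(\<Sum>a\<in>A. z powr score c c' d b a) \<le> real (card A) + z + 1/z - 2"
proof (cases "b = d")
  case False
  have "0 \<le> (z - 1)^2 / z" using z by simp
  then have "z + 1/z \<ge> 2"
    using z by (simp add: field_simps power2_eq_square)
  then show ?thesis using False z by (simp add: score_def)
next
  case True
  have "(\<Sum>a\<in>A. z powr score c c' d b a)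
      = z powr score c c' d b c + z powr score c c' d b c'
        + (\<Sum>a\<in>A-{c}-{c'}. z powr score c c' d b a)"
    using A by (simp add: sum.remove[of A c] sum.remove[of "A-{c}" c'])
  also have "\<dots> = z + 1/z + real (card A - 2)"
    using True A z by (simp add: score_def powr_minus divide_inverse card_Diff_singleton_if)
  finally show ?thesis using two_le_card[OF A] by (simp add: of_nat_diff)
qed

text \<open>Chernoff's bound, via the exponential moments z powr block_score.\<close>
lemma card_high_score_le:
  assumes A: "finite A" "c \<in> A" "c' \<in> A" "c \<noteq> c'" and z: "z \<ge> 1"
  shows "real (card {v. set v \<subseteq> A \<and> length v = length u \<and> block_score c c' d u v \<ge> real h}) * z^h
     \<le> (real (card A) + z + 1/z - 2) ^ length u"
proof -
  let ?n = "length u"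
  let ?L = "{v. set v \<subseteq> A \<and> length v = ?n}"
  let ?G = "{v. set v \<subseteq> A \<and> length v = ?n \<and> block_score c c' d u v \<ge> real h}"
  have fL: "finite ?L" using finite_lists_length_eq[OF A(1)] .
  have GL: "?G \<subseteq> ?L" by auto
  have "real (card ?G) * z^h = (\<Sum>v\<in>?G. z powr real h)"
    using z by (simp add: powr_realpow)
  also have "\<dots> \<le> (\<Sum>v\<in>?G. z powr block_score c c' d u v)"
    by (rule sum_mono) (use z in \<open>auto intro: powr_mono\<close>)
  also have "\<dots> \<le> (\<Sum>v\<in>?L. z powr block_score c c' d u v)"
    by (rule sum_mono2[OF fL GL]) auto
  also have "\<dots> = (\<Sum>v\<in>?L. \<Prod>j<?n. z powr score c c' d (u!j) (v!j))"
    using z by (simp add: block_score_def powr_sum)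
  also have "\<dots> = (\<Prod>j<?n. \<Sum>a\<in>A. z powr score c c' d (u!j) a)"
    by (rule sum_lists_length_prod[OF A(1)])
  also have "\<dots> \<le> (\<Prod>j<?n. real (card A) + z + 1/z - 2)"
    by (rule prod_mono) (use sum_powr_score_le[OF A z] in \<open>auto intro: sum_nonneg\<close>)
  finally show ?thesis by simp
qed

lemma chernoff_base_less:
  fixes k M :: nat
  assumes k: "k \<ge> 2" and M: "M \<ge> 1"
  defines "z \<equiv> 1 + 1 / real M"
  shows "(real k + z + 1/z - 2) ^ M < z * real k ^ M"
proof -
  define a where "a = 1 / (real k * real M ^ 2)"
  have z1: "z > 1" using M by (simp add: z_def)
  have "z + 1/z - 2 = (z - 1)^2 / z"
    using z1 by (simp add: field_simps power2_eq_square)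
  also have "\<dots> < (z - 1)^2"
    using z1 by (simp add: divide_less_eq)
  finally have "real k + z + 1/z - 2 < real k * (1 + a)"
    using k by (simp add: a_def z_def field_simps power2_eq_square)
  moreover have "0 \<le> real k + z + 1/z - 2"
  proof -
    have "0 \<le> 1/z" "real k \<ge> 2" using z1 k by simp_all
    then show ?thesis using z1 by linarith
  qed
  ultimately have "(real k + z + 1/z - 2) ^ M < (real k * (1 + a)) ^ M"
    using M by (intro power_strict_mono) auto
  also have "\<dots> \<le> real k ^ M * exp (real M * a)"
  proof -
    have "(1 + a) ^ M \<le> exp a ^ M"
      using exp_ge_add_one_self[of a] by (intro power_mono) (auto simp: a_def add.commute)
    then show ?thesis by (simp add: power_mult_distrib exp_of_nat_mult mult_left_mono)
  qed
  also have "\<dots> \<le> real k ^ M * z"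
  proof -
    have "exp (real M * a) \<le> 1 + 2 * (real M * a)"
    proof (rule real_exp_bound_lemma)
      have "real k * real M \<ge> 2 * 1" using k M by (intro mult_mono) auto
      then show "real M * a \<le> 1/2" using M by (simp add: a_def power2_eq_square field_simps)
    qed (simp add: a_def)
    moreover have "2 * (real M * a) \<le> 1 / real M"
      using k M by (simp add: a_def power2_eq_square field_simps)
    ultimately show ?thesis
      unfolding z_def by (intro mult_left_mono) auto
  qed
  finally show ?thesis by (simp add: mult.commute)
qed

lemma card_high_score_le_pow:
  assumes A: "finite A" "c \<in> A" "c' \<in> A" "c \<noteq> c'" and z: "z \<ge> 1"
    and u: "length u = M * h"
  defines "\<beta> \<equiv> (real (card A) + z + 1/z - 2) ^ M / (z * real (card A) ^ M)"
  shows "real (card {v. set v \<subseteq> A \<and> length v = M * h \<and> block_score c c' d u v \<ge> real h})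
     \<le> \<beta> ^ h * real (card A) ^ (M * h)"
proof -
  have "real (card {v. set v \<subseteq> A \<and> length v = M * h \<and> block_score c c' d u v \<ge> real h}) * z^h
      \<le> ((real (card A) + z + 1/z - 2) ^ M) ^ h"
    using card_high_score_le[OF A z, where u=u and d=d and h=h] u by (simp add: power_mult)
  also have "\<dots> = (\<beta> * (z * real (card A) ^ M)) ^ h"
    using z two_le_card[OF A(1-4)] unfolding \<beta>_def by simp
  also have "\<dots> = (\<beta> ^ h * real (card A) ^ (M * h)) * z^h"
    by (simp add: power_mult_distrib power_mult mult_ac)
  finally show ?thesis using z by simp
qed

lemma card_high_score_le_card_hd_not:
  assumes A: "finite A" "c \<in> A" "c' \<in> A" "c \<noteq> c'" and z: "z \<ge> 1"
    and t: "t < M * h" and u: "length u = M * h"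
    and small: "((real (card A) + z + 1/z - 2) ^ M / (z * real (card A) ^ M)) ^ h
      < 1 / real (card A) ^ Suc t"
  shows "card {v. set v \<subseteq> A \<and> length v = M * h \<and> block_score c c' d u v \<ge> real h}
    \<le> card {w. set w \<subseteq> A \<and> length w = M * h - t \<and> hd w \<noteq> c}"
proof -
  define k where "k = card A"
  have k: "k \<ge> 2" using two_le_card[OF A(1-4)] by (simp add: k_def)
  have "real (card {v. set v \<subseteq> A \<and> length v = M * h \<and> block_score c c' d u v \<ge> real h})
      \<le> ((real k + z + 1/z - 2) ^ M / (z * real k ^ M)) ^ h * real k ^ (M * h)"
    using card_high_score_le_pow[OF A z u, of d] by (simp add: k_def)
  also have "\<dots> < (1 / real k ^ Suc t) * real k ^ (M * h)"
    using small k by (intro mult_strict_right_mono) (auto simp: k_def)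
  also have "\<dots> = real k ^ (M * h - Suc t)"
    using t k by (simp add: power_diff)
  also have "\<dots> \<le> real ((k - 1) * k ^ (M * h - Suc t))"
    using k by simp
  also have "(k - 1) * k ^ (M * h - Suc t) = card {w. set w \<subseteq> A \<and> length w = M * h - t \<and> hd w \<noteq> c}"
    using card_lists_hd_not[OF A(1,2), of "M * h - Suc t"] t by (simp add: k_def Suc_diff_Suc)
  finally show ?thesis by simp
qed

lemma block_parameters_exist:
  assumes A: "finite A" "c \<in> A" "c' \<in> A" "c \<noteq> c'" and \<delta>: "\<delta> > 0"
  shows "\<exists>l h t. t < l \<and> 4 * real h \<le> \<delta> * real l \<and> 4 \<le> \<delta> * real (Suc t) \<and>
    (\<forall>u. length u = l \<longrightarrow>
       card {v. set v \<subseteq> A \<and> length v = l \<and> block_score c c' d u v \<ge> real h}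
         \<le> card {w. set w \<subseteq> A \<and> length w = l - t \<and> hd w \<noteq> c})"
proof -
  define k where "k = card A"
  have k: "k \<ge> 2" using two_le_card[OF A] by (simp add: k_def)
  obtain M :: nat where M: "4 / \<delta> < real M" using reals_Archimedean2 by blast
  then have M1: "M \<ge> 1" using \<delta> by (cases M) auto
  have \<delta>M: "4 \<le> \<delta> * real M" using M \<delta> by (simp add: divide_less_eq mult.commute)
  define z where "z = 1 + 1 / real M"
  define \<beta> where "\<beta> = (real k + z + 1/z - 2) ^ M / (z * real k ^ M)"
  have z1: "z \<ge> 1" by (simp add: z_def)
  have pos: "z * real k ^ M > 0" using z1 k by simp
  have \<beta>1: "\<beta> < 1"
    using chernoff_base_less[OF k M1] pos by (simp add: \<beta>_def z_def divide_less_eq)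
  have "0 \<le> real k + z + 1/z - 2"
  proof -
    have "0 \<le> 1/z" "real k \<ge> 2" using z1 k by simp_all
    then show ?thesis using z1 by linarith
  qed
  then have \<beta>0: "\<beta> \<ge> 0"
    using pos by (simp add: \<beta>_def)
  obtain h0 where h0: "\<beta> ^ h0 < 1 / real k ^ Suc M"
    using real_arch_pow_inv[OF _ \<beta>1, of "1 / real k ^ Suc M"] k by auto
  define h where "h = h0 + 2"
  have Mh: "M < M * h" using M1 by (simp add: h_def)
  have "\<beta> ^ h < 1 / real k ^ Suc M"
    using \<beta>0 \<beta>1 h0 power_decreasing[of h0 h \<beta>] by (simp add: h_def)
  then have "card {v. set v \<subseteq> A \<and> length v = M * h \<and> block_score c c' d u v \<ge> real h}
      \<le> card {w. set w \<subseteq> A \<and> length w = M * h - M \<and> hd w \<noteq> c}" if "length u = M * h" for u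
    using card_high_score_le_card_hd_not[OF A z1 Mh that] by (simp add: \<beta>_def k_def)
  moreover have "4 * real h \<le> \<delta> * real (M * h)"
    using \<delta>M by (simp add: mult.assoc[symmetric] mult_right_mono)
  moreover have "4 \<le> \<delta> * real (Suc M)"
    using \<delta>M \<delta> by (simp add: algebra_simps)
  ultimately show ?thesis using Mh by blast
qed

section \<open>Scores of prefixes\<close>

definition prefix_score :: "'a \<Rightarrow> 'a \<Rightarrow> 'a \<Rightarrow> (nat \<Rightarrow> 'a) \<Rightarrow> (nat \<Rightarrow> 'a) \<Rightarrow> nat \<Rightarrow> real" where
  "prefix_score c c' d x y n = (\<Sum>i<n. score c c' d (y i) (x i))"

lemma prefix_score_eq_card_diff:
  assumes "c \<noteq> c'"
  shows "prefix_score c c' d x y n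
    = real (card {i. i < n \<and> x i = c \<and> y i = d}) - real (card {i. i < n \<and> x i = c' \<and> y i = d})"
  by (induction n) (use assms in \<open>simp_all add: prefix_score_def card_less_Suc_filter score_def\<close>)

lemma prefix_score_add_le: "prefix_score c c' d x y (n + k) \<le> prefix_score c c' d x y n + real k"
proof (induction k)
  case (Suc k)
  have "score c c' d (y (n + k)) (x (n + k)) \<le> 1" by (simp add: score_def)
  then show ?case using Suc by (simp add: prefix_score_def)
qed simp

lemma frequently_large_block_prefix_score:
  assumes m: "strict_mono m" and lim: "(\<lambda>n. prefix_score c c' d x y (m n) / real (m n)) \<longlonglongrightarrow> \<delta>"
    and \<delta>: "\<delta> > 0" and l: "l > 0"
  shows "\<exists>B\<ge>N. (3*\<delta>/4) * real B * real l - real l \<le> prefix_score c c' d x y (B*l)"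
proof -
  obtain n0 where n0: "\<And>n. n \<ge> n0 \<Longrightarrow> 3*\<delta>/4 < prefix_score c c' d x y (m n) / real (m n)"
    using order_tendstoD(1)[OF lim, of "3*\<delta>/4"] \<delta> by (auto simp: eventually_sequentially)
  define n where "n = n0 + l * N + 1"
  define B where "B = m n div l"
  have mn: "n \<le> m n" using seq_suble[OF m] .
  have "N \<le> B" using mn l by (simp add: B_def n_def less_eq_div_iff_mult_less_eq mult.commute)
  have "m n > 0" using mn by (simp add: n_def)
  then have "(3*\<delta>/4) * real (m n) < prefix_score c c' d x y (m n)"
    using n0[of n] by (simp add: n_def less_divide_eq)
  moreover have "(3*\<delta>/4) * (real B * real l) \<le> (3*\<delta>/4) * real (m n)"
    using \<delta> by (intro mult_left_mono) (auto simp: B_def simp flip: of_nat_mult)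
  moreover have "prefix_score c c' d x y (m n) \<le> prefix_score c c' d x y (B*l) + real l"
  proof -
    have "m n = B*l + m n mod l" by (simp add: B_def)
    then have "prefix_score c c' d x y (m n) \<le> prefix_score c c' d x y (B*l) + real (m n mod l)"
      by (metis prefix_score_add_le)
    moreover have "m n mod l < l" using l by simp
    ultimately show ?thesis by linarith
  qed
  ultimately show ?thesis using \<open>N \<le> B\<close> by (intro exI[of _ B]) (auto simp: algebra_simps)
qed

section \<open>The block compressor\<close>

datatype 'a block_state = Reading "'a list" "'a list" | Emitting "'a list" nat

locale block_compressor =
  fixes A :: "'a set" and c c' d :: 'a and l t h :: nat
  assumes finA: "finite A" and cA: "c \<in> A" and tl: "t < l"
    and card_good_le: "\<And>u. length u = l \<Longrightarrow>
      card {v. set v \<subseteq> A \<and> length v = l \<and> block_score c c' d u v \<ge> real h}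
        \<le> card {w. set w \<subseteq> A \<and> length w = l - t \<and> hd w \<noteq> c}"
begin

text \<open>
  Good blocks are coded injectively by words of length l - t not starting with c, every other
  block v by c # v; the first output symbol tells the two cases apart. The conjunct
  length u = l makes good_blocks u empty for other u, so good_code exists for every u.\<close>

definition good_blocks :: "'a list \<Rightarrow> 'a list set" where
  "good_blocks u = {v. length u = l \<and> set v \<subseteq> A \<and> length v = l \<and> block_score c c' d u v \<ge> real h}"

definition short_codes :: "'a list set" where
  "short_codes = {w. set w \<subseteq> A \<and> length w = l - t \<and> hd w \<noteq> c}"

definition good_code :: "'a list \<Rightarrow> 'a list \<Rightarrow> 'a list" where
  "good_code u = (SOME f. f ` good_blocks u \<subseteq> short_codes \<and> inj_on f (good_blocks u))"

definition block_code :: "'a list \<Rightarrow> 'a list \<Rightarrow> 'a list" where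
  "block_code u v = (if v \<in> good_blocks u then good_code u v else c # v)"

lemma finite_short_codes: "finite short_codes"
proof -
  have "short_codes \<subseteq> {w. set w \<subseteq> A \<and> length w = l - t}" unfolding short_codes_def by auto
  then show ?thesis using finite_lists_length_eq[OF finA] finite_subset by blast
qed

lemma finite_good_blocks: "finite (good_blocks u)"
proof -
  have "good_blocks u \<subseteq> {w. set w \<subseteq> A \<and> length w = l}" unfolding good_blocks_def by auto
  then show ?thesis using finite_lists_length_eq[OF finA] finite_subset by blast
qed

lemma good_code_inj:
  "good_code u ` good_blocks u \<subseteq> short_codes \<and> inj_on (good_code u) (good_blocks u)"
proof -
  have "\<exists>f. f ` good_blocks u \<subseteq> short_codes \<and> inj_on f (good_blocks u)"
  proof (rule card_le_inj[OF finite_good_blocks finite_short_codes])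
    show "card (good_blocks u) \<le> card short_codes"
    proof (cases "length u = l")
      case True
      then show ?thesis using card_good_le[OF True] by (simp add: good_blocks_def short_codes_def)
    next
      case False
      then show ?thesis by (simp add: good_blocks_def)
    qed
  qed
  then show ?thesis unfolding good_code_def by (rule someI_ex)
qed

lemma good_code_in_short_codes: "v \<in> good_blocks u \<Longrightarrow> good_code u v \<in> short_codes"
  using good_code_inj by blast

lemma set_block_code: "set v \<subseteq> A \<Longrightarrow> set (block_code u v) \<subseteq> A"
  using good_code_in_short_codes cA by (auto simp: block_code_def short_codes_def)

lemma length_block_code:
  "length v = l \<Longrightarrow> length (block_code u v) = (if v \<in> good_blocks u then l - t else Suc l)"
  using good_code_in_short_codes by (auto simp: block_code_def short_codes_def)

lemma hd_block_code_eq_iff: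
  assumes "length v = l"
  shows "hd (block_code u v) = c \<longleftrightarrow> v \<notin> good_blocks u"
proof -
  have "good_code u v \<noteq> []" if "v \<in> good_blocks u"
    using good_code_in_short_codes[OF that] tl by (auto simp: short_codes_def)
  then show ?thesis
    using good_code_in_short_codes by (auto simp: block_code_def short_codes_def)
qed

lemma block_code_inj:
  assumes "length v = l" "length v' = l" "block_code u v = block_code u v'"
  shows "v = v'"
proof -
  have "v \<in> good_blocks u \<longleftrightarrow> v' \<in> good_blocks u"
    using hd_block_code_eq_iff[OF assms(1)] hd_block_code_eq_iff[OF assms(2)] assms(3) by metis
  then show ?thesis
    using assms(3) good_code_inj[of u] unfolding block_code_def
    by (auto split: if_splits simp: inj_on_def)
qed

definition state_space :: "'a block_state set" where
  "state_space =
    {Reading xs ys | xs ys. set xs \<subseteq> A \<and> set ys \<subseteq> A \<and> length xs = length ys \<and> length xs < l}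
    \<union> {Emitting w i | w i. set w \<subseteq> A \<and> length w \<le> Suc l \<and> i \<le> l}"

lemma finite_state_space: "finite state_space"
proof -
  let ?B = "{xs. set xs \<subseteq> A \<and> length xs \<le> Suc l}"
  have fB: "finite ?B" using finite_lists_length_le[OF finA] .
  let ?S = "case_prod Reading ` (?B \<times> ?B) \<union> case_prod Emitting ` (?B \<times> {..l})"
  have "state_space \<subseteq> ?S"
    unfolding state_space_def by force
  moreover have "finite ?S"
    using fB by auto
  ultimately show ?thesis using finite_subset by blast
qed

definition state_index :: "'a block_state \<Rightarrow> nat" where
  "state_index = to_nat_on state_space"

lemma inj_on_state_index: "inj_on state_index state_space"
  unfolding state_index_def using finite_state_space
  by (simp add: countable_finite inj_on_to_nat_on)

text \<open>
  The automaton reads l pairs of input and oracle symbols, then spends l + 1 transitions writing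
  the code of the block (at most l + 1 symbols, padded with empty outputs), and starts over.\<close>

definition block_step :: "'a block_state \<Rightarrow> 'a lab3 \<Rightarrow> 'a block_state \<Rightarrow> bool" where
  "block_step s lab s' \<longleftrightarrow> (case s of
     Reading xs ys \<Rightarrow> (\<exists>a b. a \<in> A \<and> b \<in> A \<and> lab = (Some a, Some b, None) \<and>
        s' = (if Suc (length xs) = l then Emitting (block_code (ys@[b]) (xs@[a])) 0
              else Reading (xs@[a]) (ys@[b])))
   | Emitting w i \<Rightarrow> lab = (None, None, if i < length w then Some (w!i) else None) \<and>
        s' = (if i = l then Reading [] [] else Emitting w (Suc i)))"

lemma block_step_state_space: "s \<in> state_space \<Longrightarrow> block_step s lab s' \<Longrightarrow> s' \<in> state_space"
proof -
  assume sS: "s \<in> state_space" and st: "block_step s lab s'"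
  show "s' \<in> state_space"
  proof (cases s)
    case (Reading xs ys)
    with sS have h: "set xs \<subseteq> A" "set ys \<subseteq> A" "length xs = length ys" "length xs < l"
      unfolding state_space_def by auto
    from st Reading obtain a b where ab: "a \<in> A" "b \<in> A"
      "s' = (if Suc (length xs) = l then Emitting (block_code (ys@[b]) (xs@[a])) 0
             else Reading (xs@[a]) (ys@[b]))"
      unfolding block_step_def by auto
    show ?thesis
    proof (cases "Suc (length xs) = l")
      case True
      have "set (xs@[a]) \<subseteq> A" "length (xs@[a]) = l" using h ab True by auto
      then show ?thesis
        using ab True set_block_code[of "xs@[a]" "ys@[b]"] length_block_code[of "xs@[a]" "ys@[b]"]
        unfolding state_space_def by auto
    next
      case False
      then show ?thesis using ab h unfolding state_space_def by auto
    qed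
  next
    case (Emitting w i)
    with sS st tl show ?thesis unfolding state_space_def block_step_def by auto
  qed
qed

lemma block_step_labels:
  "s \<in> state_space \<Longrightarrow> block_step s lab s' \<Longrightarrow>
    opt_ok A (fst lab) \<and> opt_ok A (fst (snd lab)) \<and> opt_ok A (snd (snd lab))"
  unfolding state_space_def block_step_def opt_ok_def by (auto split: block_state.splits if_splits)

lemma block_step_det: "block_step s lab s1 \<Longrightarrow> block_step s lab s2 \<Longrightarrow> s1 = s2"
  unfolding block_step_def by (auto split: block_state.splits)

definition block_automaton :: "'a aut3" where
  "block_automaton =
    \<lparr>states = state_index ` state_space,
     trans = {(state_index s, lab, state_index s') | s lab s'.
       s \<in> state_space \<and> block_step s lab s'},
     init = {state_index (Reading [] [])}\<rparr>"

lemma trans_block_automatonI: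
  "s \<in> state_space \<Longrightarrow> block_step s lab s' \<Longrightarrow>
    (state_index s, lab, state_index s') \<in> trans block_automaton"
  unfolding block_automaton_def by (cases lab) auto

lemma initial_in_state_space: "Reading [] [] \<in> state_space"
  unfolding state_space_def using tl by auto

lemma is_aut3_block_automaton: "is_aut3 A block_automaton"
  unfolding is_aut3_def block_automaton_def
  using finite_state_space initial_in_state_space block_step_state_space block_step_labels by auto

lemma two_det_block_automaton: "two_det block_automaton"
  unfolding two_det_def
proof (intro conjI)
  show "\<exists>q0. init block_automaton = {q0}" by (simp add: block_automaton_def)
  show "\<forall>p a1 a2 a3 q b1 b2 b3 q'.
        (p, (a1, a2, a3), q) \<in> trans block_automaton \<longrightarrow>
        (p, (b1, b2, b3), q') \<in> trans block_automaton \<longrightarrow>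
          (a1 = None \<longrightarrow> b1 = None) \<and> (a2 = None \<longrightarrow> b2 = None) \<and>
          (a1 = b1 \<and> a2 = b2 \<longrightarrow> a3 = b3 \<and> q = q')"
  proof (intro allI impI)
    fix p a1 a2 a3 q b1 b2 b3 q'
    assume t1: "(p, (a1, a2, a3), q) \<in> trans block_automaton"
      and t2: "(p, (b1, b2, b3), q') \<in> trans block_automaton"
    from t1 obtain s s' where s: "s \<in> state_space" "block_step s (a1,a2,a3) s'" "p = state_index s"
      "q = state_index s'"
      by (auto simp: block_automaton_def)
    from t2 obtain r r' where r: "r \<in> state_space" "block_step r (b1,b2,b3) r'" "p = state_index r"
      "q' = state_index r'"
      by (auto simp: block_automaton_def)
    have sr: "s = r" using s r inj_on_state_index by (metis inj_on_def)
    show "(a1 = None \<longrightarrow> b1 = None) \<and> (a2 = None \<longrightarrow> b2 = None) \<and>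
          (a1 = b1 \<and> a2 = b2 \<longrightarrow> a3 = b3 \<and> q = q')"
      using s r sr by (auto simp: block_step_def split: block_state.splits)
  qed
qed

definition period :: nat where
  "period = 2*l + 1"

definition read_time :: "nat \<Rightarrow> nat" where
  "read_time i = i div l * period + i mod l"

definition block :: "(nat \<Rightarrow> 'a) \<Rightarrow> nat \<Rightarrow> 'a list" where
  "block X b = map (\<lambda>j. X (b*l + j)) [0..<l]"

definition block_output :: "(nat \<Rightarrow> 'a) \<Rightarrow> (nat \<Rightarrow> 'a) \<Rightarrow> nat \<Rightarrow> 'a list" where
  "block_output X Y b = block_code (block Y b) (block X b)"

text \<open>The run on input X and oracle Y: transition n is step n mod period of block n div period.\<close>

definition canon_state :: "(nat \<Rightarrow> 'a) \<Rightarrow> (nat \<Rightarrow> 'a) \<Rightarrow> nat \<Rightarrow> 'a block_state" where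
  "canon_state X Y n =
    (if n mod period < l
     then Reading (take (n mod period) (block X (n div period)))
                  (take (n mod period) (block Y (n div period)))
     else Emitting (block_output X Y (n div period)) (n mod period - l))"

definition canon_label :: "(nat \<Rightarrow> 'a) \<Rightarrow> (nat \<Rightarrow> 'a) \<Rightarrow> nat \<Rightarrow> 'a lab3" where
  "canon_label X Y n =
    (if n mod period < l
     then (Some (X (n div period * l + n mod period)),
           Some (Y (n div period * l + n mod period)), None)
     else (None, None,
       if n mod period - l < length (block_output X Y (n div period))
       then Some (block_output X Y (n div period) ! (n mod period - l)) else None))"

lemma period_pos: "period > 0"
  by (simp add: period_def)

lemma l_pos: "l > 0"
  using tl by simp

lemma set_block: "\<forall>i. X i \<in> A \<Longrightarrow> set (block X b) \<subseteq> A"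
  by (auto simp: block_def)

lemma nth_block: "j < l \<Longrightarrow> block X b ! j = X (b*l + j)"
  by (simp add: block_def)

lemma length_block [simp]: "length (block X b) = l"
  by (simp add: block_def)

lemma set_block_output: "\<forall>i. X i \<in> A \<Longrightarrow> set (block_output X Y b) \<subseteq> A"
  unfolding block_output_def by (intro set_block_code set_block)

lemma length_block_output:
  "length (block_output X Y b) = (if block X b \<in> good_blocks (block Y b) then l - t else Suc l)"
  unfolding block_output_def by (simp add: length_block_code)

lemma length_block_output_le: "length (block_output X Y b) \<le> Suc l"
  by (simp add: length_block_output le_SucI)

lemma block_output_ne_Nil: "block_output X Y b \<noteq> []"
  using length_block_output[of X Y b] tl by (auto split: if_splits)

lemma hd_block_output_eq_iff:
  "hd (block_output X Y b) = c \<longleftrightarrow> block X b \<notin> good_blocks (block Y b)"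
  unfolding block_output_def by (simp add: hd_block_code_eq_iff)

lemma div_mod_period_Suc:
  "Suc (n mod period) < period \<Longrightarrow>
    Suc n div period = n div period \<and> Suc n mod period = Suc (n mod period)"
  "Suc (n mod period) = period \<Longrightarrow>
    Suc n div period = Suc (n div period) \<and> Suc n mod period = 0"
  by (auto simp: mod_Suc div_Suc)

lemma canon_state_in_state_space:
  assumes X: "\<forall>i. X i \<in> A" and Y: "\<forall>i. Y i \<in> A"
  shows "canon_state X Y n \<in> state_space"
proof (cases "n mod period < l")
  case True
  have "set (take (n mod period) (block X (n div period))) \<subseteq> A"
    "set (take (n mod period) (block Y (n div period))) \<subseteq> A"
    using set_block[OF X] set_block[OF Y] set_take_subset by (meson subset_trans)+
  then show ?thesis using True unfolding state_space_def canon_state_def by auto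
next
  case False
  have "n mod period < period" using period_pos by simp
  then have "n mod period - l \<le> l" unfolding period_def by linarith
  then show ?thesis using False set_block_output[OF X] length_block_output_le
    unfolding state_space_def canon_state_def by auto
qed

lemma canon_state_0: "canon_state X Y 0 = Reading [] []"
  using l_pos by (simp add: canon_state_def)

lemma canon_step_reading:
  assumes X: "\<forall>i. X i \<in> A" and Y: "\<forall>i. Y i \<in> A" and rd: "n mod period < l"
  shows "block_step (canon_state X Y n) (canon_label X Y n) (canon_state X Y (Suc n))"
proof -
  define b r where "b = n div period" and "r = n mod period"
  have "Suc r < period" using rd by (simp add: r_def period_def)
  then have ds: "Suc n div period = b" "Suc n mod period = Suc r"
    using div_mod_period_Suc(1) by (auto simp: b_def r_def)
  have tk: "take r (block X b) @ [X (b*l + r)] = take (Suc r) (block X b)"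
           "take r (block Y b) @ [Y (b*l + r)] = take (Suc r) (block Y b)"
    using rd by (auto simp: r_def take_Suc_conv_app_nth nth_block)
  show ?thesis
  proof (cases "Suc r = l")
    case True
    then have "take (Suc r) (block X b) = block X b" "take (Suc r) (block Y b) = block Y b"
      by auto
    then show ?thesis using rd True X Y ds tk
      unfolding block_step_def canon_state_def canon_label_def
      by (auto simp: b_def[symmetric] r_def[symmetric] block_output_def)
  next
    case False
    then show ?thesis using rd X Y ds tk
      unfolding block_step_def canon_state_def canon_label_def
      by (auto simp: b_def[symmetric] r_def[symmetric])
  qed
qed

lemma canon_step_emitting:
  assumes em: "\<not> n mod period < l"
  shows "block_step (canon_state X Y n) (canon_label X Y n) (canon_state X Y (Suc n))"
proof -
  define b r where "b = n div period" and "r = n mod period"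
  show ?thesis
  proof (cases "Suc r < period")
    case True
    have ds: "Suc n div period = b" "Suc n mod period = Suc r"
      using div_mod_period_Suc(1)[OF True[unfolded r_def]] by (auto simp: b_def r_def)
    have "r - l \<noteq> l" using True em by (simp add: r_def period_def)
    then show ?thesis using em ds unfolding block_step_def canon_state_def canon_label_def
      by (auto simp: b_def[symmetric] r_def[symmetric] Suc_diff_le)
  next
    case False
    then have eq: "Suc r = period"
      using mod_less_divisor[OF period_pos, of n] by (simp add: r_def)
    have ds: "Suc n div period = Suc b" "Suc n mod period = 0"
      using div_mod_period_Suc(2)[OF eq[unfolded r_def]] by (auto simp: b_def r_def)
    have "r - l = l" using eq by (simp add: period_def)
    then show ?thesis using em ds l_pos
      unfolding block_step_def canon_state_def canon_label_def
      by (auto simp: b_def[symmetric] r_def[symmetric])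
  qed
qed

lemma canon_step:
  "\<forall>i. X i \<in> A \<Longrightarrow> \<forall>i. Y i \<in> A \<Longrightarrow>
    block_step (canon_state X Y n) (canon_label X Y n) (canon_state X Y (Suc n))"
  using canon_step_reading canon_step_emitting by blast

lemma block_step_emitting_label:
  assumes "\<not> n mod period < l" "block_step (canon_state X Y n) lab s'"
  shows "lab = canon_label X Y n"
  using assms unfolding block_step_def canon_state_def canon_label_def by simp

definition output_length :: "(nat \<Rightarrow> 'a) \<Rightarrow> (nat \<Rightarrow> 'a) \<Rightarrow> nat \<Rightarrow> nat" where
  "output_length X Y B = (\<Sum>b<B. length (block_output X Y b))"

lemma comp12_canon_label:
  "comp1 (canon_label X Y) n \<noteq> None \<longleftrightarrow> n mod period < l"
  "comp2 (canon_label X Y) n \<noteq> None \<longleftrightarrow> n mod period < l"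
  by (auto simp: comp1_def comp2_def canon_label_def)

lemma comp3_canon_label:
  "comp3 (canon_label X Y) n \<noteq> None \<longleftrightarrow>
    \<not> n mod period < l \<and> n mod period - l < length (block_output X Y (n div period))"
  by (auto simp: comp3_def canon_label_def)

lemma opt_len_periodic:
  assumes "\<And>n. s n \<noteq> None \<longleftrightarrow> n mod period < l"
  shows "opt_len s n = n div period * l + min (n mod period) l"
proof (induction n)
  case 0
  then show ?case by simp
next
  case (Suc n)
  show ?case
  proof (cases "Suc (n mod period) < period")
    case True
    note ds = div_mod_period_Suc(1)[OF True]
    show ?thesis using Suc.IH assms[of n] ds by (auto simp: opt_len_Suc)
  next
    case False
    then have eq: "Suc (n mod period) = period" using mod_less_divisor[OF period_pos, of n] by simp
    note ds = div_mod_period_Suc(2)[OF eq]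
    have "n mod period = 2*l" using eq by (simp add: period_def)
    then show ?thesis using Suc.IH assms[of n] ds by (auto simp: opt_len_Suc)
  qed
qed

lemma opt_len_canon_output:
  "opt_len (comp3 (canon_label X Y)) n
    = output_length X Y (n div period)
      + min (n mod period - l) (length (block_output X Y (n div period)))"
proof (induction n)
  case 0
  then show ?case by (simp add: output_length_def)
next
  case (Suc n)
  define r where "r = n mod period"
  define b where "b = n div period"
  show ?case
  proof (cases "Suc r < period")
    case True
    note ds = div_mod_period_Suc(1)[OF True[unfolded r_def]]
    show ?thesis
    proof (cases "r < l")
      case True
      then show ?thesis using Suc.IH comp3_canon_label[of X Y n] ds
        by (auto simp: opt_len_Suc r_def[symmetric] b_def[symmetric])
    next
      case False
      then have "Suc r - l = Suc (r - l)" by simp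
      then show ?thesis using False Suc.IH comp3_canon_label[of X Y n] ds
        by (auto simp: opt_len_Suc r_def[symmetric] b_def[symmetric])
    qed
  next
    case False
    then have eq: "Suc r = period" using mod_less_divisor[OF period_pos, of n] by (simp add: r_def)
    note ds = div_mod_period_Suc(2)[OF eq[unfolded r_def]]
    have rl: "r - l = l" "\<not> r < l" using eq by (auto simp: period_def)
    have len: "length (block_output X Y b) \<le> Suc l" by (rule length_block_output_le)
    have "output_length X Y (Suc b) = output_length X Y b + length (block_output X Y b)"
      by (simp add: output_length_def)
    then show ?thesis using Suc.IH comp3_canon_label[of X Y n] ds rl len
      by (auto simp: opt_len_Suc r_def[symmetric] b_def[symmetric])
  qed
qed

lemma div_mod_period:
  "r < period \<Longrightarrow> (b*period + r) div period = b \<and> (b*period + r) mod period = r"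
  using period_pos by simp

lemma infinite_comp12_canon_label:
  "infinite {n. comp1 (canon_label X Y) n \<noteq> None}"
  "infinite {n. comp2 (canon_label X Y) n \<noteq> None}"
proof -
  have "\<exists>n\<ge>N. n \<in> {n. n mod period < l}" for N
  proof -
    have "N \<le> N*period" using period_pos by simp
    moreover have "N*period \<in> {n. n mod period < l}" using l_pos by simp
    ultimately show ?thesis by blast
  qed
  then have i: "infinite {n. n mod period < l}" by (simp add: infinite_nat_iff_unbounded_le)
  have "{n. comp1 (canon_label X Y) n \<noteq> None} = {n. n mod period < l}"
    "{n. comp2 (canon_label X Y) n \<noteq> None} = {n. n mod period < l}"
    using comp12_canon_label by auto
  then show "infinite {n. comp1 (canon_label X Y) n \<noteq> None}"
    "infinite {n. comp2 (canon_label X Y) n \<noteq> None}"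
    using i by auto
qed

lemma infinite_comp3_canon_label: "infinite {n. comp3 (canon_label X Y) n \<noteq> None}"
  unfolding infinite_nat_iff_unbounded_le
proof
  fix N
  have lP: "l < period" by (simp add: period_def)
  have "N \<le> N*period" using period_pos by simp
  then have "N*period + l \<ge> N" by linarith
  moreover have "N*period + l \<in> {n. comp3 (canon_label X Y) n \<noteq> None}"
  proof -
    have m: "(N*period+l) mod period = l" "(N*period+l) div period = N"
      using div_mod_period[OF lP, of N] by auto
    have "comp3 (canon_label X Y) (N*period + l) \<noteq> None"
      by (simp only: comp3_canon_label m) (use block_output_ne_Nil in simp)
    then show ?thesis by simp
  qed
  ultimately show "\<exists>n\<ge>N. n \<in> {n. comp3 (canon_label X Y) n \<noteq> None}" by blast
qed

lemma read_time_div_mod: "read_time i div period = i div l" "read_time i mod period = i mod l"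
proof -
  have "i mod l < l" using l_pos by simp
  then have "i mod l < period" by (simp add: period_def)
  then show "read_time i div period = i div l" "read_time i mod period = i mod l"
    using div_mod_period by (auto simp: read_time_def)
qed

lemma canon_label_read_time: "canon_label X Y (read_time i) = (Some (X i), Some (Y i), None)"
  using l_pos by (simp add: canon_label_def read_time_div_mod)

lemma opt_len_periodic_read_time:
  assumes "\<And>n. s n \<noteq> None \<longleftrightarrow> n mod period < l"
  shows "opt_len s (read_time i) = i"
  using l_pos by (simp add: opt_len_periodic[OF assms] read_time_div_mod)

lemma opt_word_canon_input:
  "opt_word (comp1 (canon_label X Y)) = X" "opt_word (comp2 (canon_label X Y)) = Y"
proof -
  show "opt_word (comp1 (canon_label X Y)) = X"
  proof
    fix i
    have "comp1 (canon_label X Y) (read_time i) = Some (X i)"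
      by (simp add: comp1_def canon_label_read_time)
    then show "opt_word (comp1 (canon_label X Y)) i = X i"
      using opt_word_opt_len[OF infinite_comp12_canon_label(1), of X Y "read_time i"]
      by (simp add: opt_len_periodic_read_time[OF comp12_canon_label(1)])
  qed
  show "opt_word (comp2 (canon_label X Y)) = Y"
  proof
    fix i
    have "comp2 (canon_label X Y) (read_time i) = Some (Y i)"
      by (simp add: comp2_def canon_label_read_time)
    then show "opt_word (comp2 (canon_label X Y)) i = Y i"
      using opt_word_opt_len[OF infinite_comp12_canon_label(2), of X Y "read_time i"]
      by (simp add: opt_len_periodic_read_time[OF comp12_canon_label(2)])
  qed
qed

lemma opt_word_canon_output:
  assumes j: "j < length (block_output X Y b)"
  shows "opt_word (comp3 (canon_label X Y)) (output_length X Y b + j) = block_output X Y b ! j"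
proof -
  have jl: "j \<le> l" using j length_block_output_le[of X Y b] by simp
  have r: "l + j < period" using jl by (simp add: period_def)
  note dm = div_mod_period[OF r, of b]
  have n: "b*period + l + j = b*period + (l + j)" by simp
  have "opt_len (comp3 (canon_label X Y)) (b*period + l + j) = output_length X Y b + j"
    using dm j by (simp only: n opt_len_canon_output)
  moreover have "comp3 (canon_label X Y) (b*period + l + j) = Some (block_output X Y b ! j)"
    using dm j by (simp only: n) (simp add: comp3_def canon_label_def)
  ultimately show ?thesis
    using opt_word_opt_len[OF infinite_comp3_canon_label[of X Y], where n="b*period + l + j"]
    by simp
qed

lemma accepting_canon_run:
  assumes X: "\<forall>i. X i \<in> A" and Y: "\<forall>i. Y i \<in> A"
  shows "accepting block_automaton (\<lambda>n. state_index (canon_state X Y n)) (canon_label X Y)"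
proof -
  have "(state_index (canon_state X Y n), canon_label X Y n, state_index (canon_state X Y (Suc n)))
      \<in> trans block_automaton" for n
    using trans_block_automatonI[OF canon_state_in_state_space[OF X Y] canon_step[OF X Y]] .
  then show ?thesis unfolding accepting_def
    using infinite_comp12_canon_label infinite_comp3_canon_label canon_state_0
    by (auto simp: block_automaton_def)
qed


lemma accepting_run_step:
  assumes acc: "accepting block_automaton qs ls" and X: "\<forall>i. X i \<in> A" and Y: "\<forall>i. Y i \<in> A"
    and Xd: "\<And>i a. comp1 ls (read_time i) = Some a \<Longrightarrow> a \<in> A \<Longrightarrow> X i = a"
    and Yd: "\<And>i a. comp2 ls (read_time i) = Some a \<Longrightarrow> a \<in> A \<Longrightarrow> Y i = a"
    and q: "qs n = state_index (canon_state X Y n)"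
  shows "ls n = canon_label X Y n \<and> qs (Suc n) = state_index (canon_state X Y (Suc n))"
proof -
  have "(qs n, ls n, qs (Suc n)) \<in> trans block_automaton" using acc by (simp add: accepting_def)
  then obtain s s' where s: "qs n = state_index s" "s \<in> state_space" "block_step s (ls n) s'"
    "qs (Suc n) = state_index s'"
    by (auto simp: block_automaton_def)
  have ss: "s = canon_state X Y n"
    using s(1,2) q canon_state_in_state_space[OF X Y] inj_on_state_index by (metis inj_on_def)
  have lb: "ls n = canon_label X Y n"
  proof (cases "n mod period < l")
    case True
    define b r where "b = n div period" and "r = n mod period"
    have rl: "r < l" using True by (simp add: r_def)
    have g: "read_time (b*l + r) = n"
      using rl by (simp add: read_time_def b_def r_def)
    from s(3) ss True obtain a b' where ab: "a \<in> A" "b' \<in> A" "ls n = (Some a, Some b', None)"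
      unfolding block_step_def canon_state_def by auto
    have "X (b*l+r) = a" using Xd[of "b*l+r" a] g ab by (simp add: comp1_def)
    moreover have "Y (b*l+r) = b'" using Yd[of "b*l+r" b'] g ab by (simp add: comp2_def)
    ultimately show ?thesis using ab True by (simp add: canon_label_def b_def r_def)
  next
    case False
    show ?thesis
      using block_step_emitting_label[OF False s(3)[unfolded ss]] .
  qed
  have "s' = canon_state X Y (Suc n)"
    using block_step_det[OF s(3)[unfolded ss lb] canon_step[OF X Y]] .
  then show ?thesis using lb s(4) by simp
qed

lemma accepting_run_canonical:
  assumes acc: "accepting block_automaton qs ls"
  shows "\<exists>X Y. (\<forall>i. X i \<in> A) \<and> (\<forall>i. Y i \<in> A) \<and> ls = canon_label X Y"
proof -
  define X where
    "X i = (case comp1 ls (read_time i) of Some a \<Rightarrow> if a \<in> A then a else c | None \<Rightarrow> c)" for i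
  define Y where
    "Y i = (case comp2 ls (read_time i) of Some a \<Rightarrow> if a \<in> A then a else c | None \<Rightarrow> c)" for i
  have XA: "\<forall>i. X i \<in> A" using cA by (auto simp: X_def split: option.splits)
  have YA: "\<forall>i. Y i \<in> A" using cA by (auto simp: Y_def split: option.splits)
  have Xd: "\<And>i a. comp1 ls (read_time i) = Some a \<Longrightarrow> a \<in> A \<Longrightarrow> X i = a"
    by (simp add: X_def)
  have Yd: "\<And>i a. comp2 ls (read_time i) = Some a \<Longrightarrow> a \<in> A \<Longrightarrow> Y i = a"
    by (simp add: Y_def)
  have q: "qs n = state_index (canon_state X Y n)" for n
  proof (induction n)
    case 0
    then show ?case using acc canon_state_0 by (simp add: accepting_def block_automaton_def)
  next
    case (Suc n)
    then show ?case using accepting_run_step[OF acc XA YA Xd Yd] by blast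
  qed
  have "ls n = canon_label X Y n" for n using accepting_run_step[OF acc XA YA Xd Yd q] by blast
  then show ?thesis using XA YA by blast
qed

lemma canon_output_inj:
  assumes X: "\<forall>i. X i \<in> A" and X': "\<forall>i. X' i \<in> A"
    and eq: "opt_word (comp3 (canon_label X Y)) = opt_word (comp3 (canon_label X' Y))"
  shows "X = X'"
proof -
  have blk: "block X b = block X' b" for b
  proof (induction b rule: less_induct)
    case (less b)
    have SBe: "output_length X Y b = output_length X' Y b"
      unfolding output_length_def block_output_def using less by simp
    let ?w = "block_output X Y b" and ?w' = "block_output X' Y b" and ?u = "block Y b"
    have ne: "?w \<noteq> []" "?w' \<noteq> []" by (simp_all add: block_output_ne_Nil)
    have w0: "?w ! 0 = ?w' ! 0"
      using opt_word_canon_output[of 0 X Y b] opt_word_canon_output[of 0 X' Y b] ne eq SBe by simp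
    have "hd ?w = hd ?w'" using w0 ne by (simp add: hd_conv_nth)
    then have gg: "block X b \<in> good_blocks ?u \<longleftrightarrow> block X' b \<in> good_blocks ?u"
      by (metis hd_block_output_eq_iff)
    have len: "length ?w = length ?w'" using gg by (simp add: length_block_output)
    have "?w = ?w'"
    proof (rule nth_equalityI[OF len])
      fix j assume "j < length ?w"
      then show "?w ! j = ?w' ! j"
        using opt_word_canon_output[of j X Y b] opt_word_canon_output[of j X' Y b] len eq SBe
        by simp
    qed
    then show ?case using block_code_inj[OF length_block length_block] unfolding block_output_def
      by blast
  qed
  show ?thesis
  proof
    fix i
    have i: "i = (i div l)*l + i mod l" by simp
    have il: "i mod l < l" using l_pos by simp
    have "X i = block X (i div l) ! (i mod l)" using nth_block[OF il] i by metis
    also have "\<dots> = block X' (i div l) ! (i mod l)" using blk by simp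
    also have "\<dots> = X' i" using nth_block[OF il] i by metis
    finally show "X i = X' i" .
  qed
qed

lemma compressor_block_automaton: "compressor A block_automaton"
  unfolding compressor_def
proof (intro conjI is_aut3_block_automaton two_det_block_automaton allI impI)
  fix qs ls qs' ls'
  assume a: "accepting block_automaton qs ls" "accepting block_automaton qs' ls'"
    and e2: "opt_word (comp2 ls) = opt_word (comp2 ls')"
    and e3: "opt_word (comp3 ls) = opt_word (comp3 ls')"
  obtain X Y where XY: "\<forall>i. X i \<in> A" "\<forall>i. Y i \<in> A" "ls = canon_label X Y"
    using accepting_run_canonical[OF a(1)] by blast
  obtain X' Y' where XY': "\<forall>i. X' i \<in> A" "\<forall>i. Y' i \<in> A" "ls' = canon_label X' Y'"
    using accepting_run_canonical[OF a(2)] by blast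
  have "Y = Y'" using e2 XY(3) XY'(3) opt_word_canon_input(2) by metis
  then have "X = X'" using canon_output_inj[OF XY(1) XY'(1)] e3 XY(3) XY'(3) by simp
  then show "opt_word (comp1 ls) = opt_word (comp1 ls')" using XY(3) XY'(3)
    by (simp add: opt_word_canon_input)
qed

lemma run_ratio_canon_le:
  assumes often: "\<And>N. \<exists>B\<ge>N. B > 0 \<and> real (output_length X Y B) \<le> C * real (B*l)"
  shows "run_ratio (canon_label X Y) \<le> ereal C"
proof -
  let ?f = "\<lambda>n. ereal (real (opt_len (comp3 (canon_label X Y)) n)
                        / real (opt_len (comp1 (canon_label X Y)) n))"
  have at: "?f (B*period) = ereal (real (output_length X Y B) / real (B*l))" for B
  proof -
    have dm: "B*period div period = B" "B*period mod period = 0" using period_pos by auto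
    show ?thesis using dm
      by (simp add: opt_len_canon_output opt_len_periodic[OF comp12_canon_label(1)])
  qed
  have "(SUP n. INF m\<in>{n..}. ?f m) \<le> ereal C"
  proof (rule SUP_least)
    fix n
    obtain B where B: "B \<ge> n" "B > 0" "real (output_length X Y B) \<le> C * real (B*l)"
      using often by blast
    have "B*period \<ge> n" using B period_pos
      by (metis le_trans mult_le_mono2 nat_mult_1_right Suc_leI One_nat_def)
    then have "(INF m\<in>{n..}. ?f m) \<le> ?f (B*period)" by (intro INF_lower) simp
    also have "\<dots> \<le> ereal C"
    proof -
      have pos: "real (B*l) > 0" using B l_pos by simp
      have "real (output_length X Y B) / real (B*l) \<le> C" using B(3) pos by (simp add: divide_le_eq)
      then show ?thesis using at by simp
    qed
    finally show "(INF m\<in>{n..}. ?f m) \<le> ereal C" .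
  qed
  then show ?thesis unfolding run_ratio_def liminf_SUP_INF .
qed

lemma sum_block_score_eq_prefix_score:
  "(\<Sum>b<B. block_score c c' d (block y b) (block x b)) = prefix_score c c' d x y (B*l)"
proof -
  have "block_score c c' d (block y b) (block x b) = (\<Sum>i\<in>{b*l..<b*l+l}. score c c' d (y i) (x i))"
    for b
  proof -
    have "block_score c c' d (block y b) (block x b) = (\<Sum>j<l. score c c' d (y (b*l+j)) (x (b*l+j)))"
      by (simp add: block_score_def nth_block)
    also have "\<dots> = (\<Sum>i\<in>{0+b*l..<l+b*l}. score c c' d (y i) (x i))"
      by (subst sum.shift_bounds_nat_ivl) (simp add: lessThan_atLeast0 add.commute)
    finally show ?thesis by (simp add: add.commute)
  qed
  then show ?thesis unfolding prefix_score_def by (simp add: sum.nat_group)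
qed

definition good_count :: "(nat \<Rightarrow> 'a) \<Rightarrow> (nat \<Rightarrow> 'a) \<Rightarrow> nat \<Rightarrow> nat" where
  "good_count X Y B = card {b. b < B \<and> block X b \<in> good_blocks (block Y b)}"

lemma sum_of_bool_good_eq_good_count:
  "(\<Sum>b<B. of_bool (block X b \<in> good_blocks (block Y b))) = real (good_count X Y B)"
proof -
  have "{..<B} \<inter> {b. block X b \<in> good_blocks (block Y b)}
      = {b. b < B \<and> block X b \<in> good_blocks (block Y b)}"
    by auto
  then show ?thesis by (simp add: good_count_def)
qed

lemma output_length_eq:
  "real (output_length X Y B) = real B * (real l + 1) - real (Suc t) * real (good_count X Y B)"
proof -
  have "real (output_length X Y B)
      = (\<Sum>b<B. real l + 1 - real (Suc t) * of_bool (block X b \<in> good_blocks (block Y b)))"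
    unfolding output_length_def of_nat_sum
    by (intro sum.cong) (use length_block_output tl in \<open>auto simp: of_nat_diff\<close>)
  then show ?thesis
    by (simp add: sum_subtractf sum_distrib_left[symmetric] sum_of_bool_good_eq_good_count)
qed

lemma good_count_ge:
  fixes \<delta> :: real
  assumes x: "\<forall>i. x i \<in> A" and h: "4 * real h \<le> \<delta> * real l"
    and score: "(3*\<delta>/4) * real B * real l - real l \<le> prefix_score c c' d x y (B*l)"
  shows "(\<delta>/2) * real B - 1 \<le> real (good_count x y B)"
proof -
  let ?g = "\<lambda>b. of_bool (block x b \<in> good_blocks (block y b)) :: real"
  have "block_score c c' d (block y b) (block x b) \<le> real l * ?g b + real h" for b
  proof (cases "block x b \<in> good_blocks (block y b)")
    case True
    have "block_score c c' d (block y b) (block x b) \<le> (\<Sum>j<l. 1)"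
      unfolding block_score_def length_block by (rule sum_mono) (simp add: score_def)
    then show ?thesis using True by simp
  next
    case False
    then show ?thesis using set_block[OF x] by (simp add: good_blocks_def)
  qed
  then have "prefix_score c c' d x y (B*l) \<le> (\<Sum>b<B. real l * ?g b + real h)"
    unfolding sum_block_score_eq_prefix_score[symmetric] by (rule sum_mono)
  also have "\<dots> = real l * real (good_count x y B) + real B * real h"
    by (simp add: sum.distrib sum_distrib_left[symmetric] sum_of_bool_good_eq_good_count)
  moreover have "4 * (real B * real h) \<le> \<delta> * real B * real l"
    using mult_left_mono[OF h, of "real B"] by (simp add: algebra_simps)
  ultimately have "real l * ((\<delta>/2) * real B - 1) \<le> real l * real (good_count x y B)"
    using score by (simp add: algebra_simps)
  then show ?thesis
    using l_pos by simp
qed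

lemma output_length_le:
  fixes \<delta> :: real
  assumes x: "\<forall>i. x i \<in> A"
    and h: "4 * real h \<le> \<delta> * real l" and t: "4 \<le> \<delta> * real (Suc t)"
    and B: "2 * Suc t \<le> B"
    and score: "(3*\<delta>/4) * real B * real l - real l \<le> prefix_score c c' d x y (B*l)"
  shows "real (output_length x y B) \<le> (1 - 1/(2*real l)) * real (B*l)"
proof -
  have "real (output_length x y B) \<le> real B * (real l + 1) - real (Suc t) * ((\<delta>/2) * real B - 1)"
    unfolding output_length_eq using good_count_ge[OF x h score] by (simp add: mult_left_mono)
  also have "\<dots> \<le> real B * real l - real B + real (Suc t)"
    using mult_right_mono[OF t, of "real B"] by (simp add: algebra_simps)
  also have "\<dots> \<le> real B * real l - real B / 2"
    using B by simp
  also have "\<dots> = (1 - 1/(2*real l)) * real (B*l)"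
    using l_pos by (simp add: field_simps)
  finally show ?thesis .
qed

lemma rho_le_run_ratio_canon:
  assumes "\<forall>i. x i \<in> A" "\<forall>i. y i \<in> A"
  shows "rho A x y \<le> run_ratio (canon_label x y)"
  unfolding rho_def
  using compressor_block_automaton accepting_canon_run[OF assms] opt_word_canon_input
  by (intro Inf_lower) blast

end

lemma rho_less_1_if_score_gap:
  fixes A :: "'a set" and x y :: "nat \<Rightarrow> 'a" and m :: "nat \<Rightarrow> nat" and L L' :: real
  assumes A: "finite A" "c \<in> A" "c' \<in> A"
    and x: "\<forall>i. x i \<in> A" and y: "\<forall>i. y i \<in> A"
    and m: "strict_mono m"
    and lim: "(\<lambda>n. real (card {i. i < m n \<and> x i = c \<and> y i = d}) / real (m n)) \<longlonglongrightarrow> L"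
    and lim': "(\<lambda>n. real (card {i. i < m n \<and> x i = c' \<and> y i = d}) / real (m n)) \<longlonglongrightarrow> L'"
    and less: "L' < L"
  shows "rho A x y < 1"
proof -
  have cc': "c \<noteq> c'" using lim lim' less LIMSEQ_unique by force
  obtain l h t where t: "t < l" and h: "4 * real h \<le> (L - L') * real l"
      and t': "4 \<le> (L - L') * real (Suc t)"
      and card: "\<forall>u. length u = l \<longrightarrow>
         card {v. set v \<subseteq> A \<and> length v = l \<and> block_score c c' d u v \<ge> real h}
           \<le> card {w. set w \<subseteq> A \<and> length w = l - t \<and> hd w \<noteq> c}"
    using block_parameters_exist[OF A cc', of "L - L'" d] less by auto
  interpret block_compressor A c c' d l t h
    using A t card by unfold_locales auto
  have "(\<lambda>n. prefix_score c c' d x y (m n) / real (m n)) \<longlonglongrightarrow> L - L'"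
    using tendsto_diff[OF lim lim']
    by (simp add: prefix_score_eq_card_diff[OF cc'] diff_divide_distrib)
  then have "\<exists>B\<ge>N. B > 0 \<and> real (output_length x y B) \<le> (1 - 1/(2*real l)) * real (B*l)" for N
  proof -
    obtain B where B: "N + 2 * Suc t \<le> B"
      and score: "(3*(L - L')/4) * real B * real l - real l \<le> prefix_score c c' d x y (B*l)"
      using frequently_large_block_prefix_score[OF m \<open>_ \<longlonglongrightarrow> L - L'\<close> _ l_pos] less by auto
    then show ?thesis
      using output_length_le[OF x h t' _ score] by (intro exI[of _ B]) auto
  qed
  then have "run_ratio (canon_label x y) \<le> ereal (1 - 1/(2*real l))"
    by (rule run_ratio_canon_le)
  with rho_le_run_ratio_canon[OF x y] have "rho A x y \<le> ereal (1 - 1/(2*real l))"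
    by (rule order.trans)
  also have "\<dots> < 1" using l_pos by simp
  finally show ?thesis .
qed

theorem proposition4:
  fixes A :: "'a set" and x y :: "nat \<Rightarrow> 'a" and c c' d :: 'a
    and m :: "nat \<Rightarrow> nat" and L L' :: real
  assumes "finite A"
    and "\<And>i. x i \<in> A" and "\<And>i. y i \<in> A"
    and "c \<in> A" and "c' \<in> A" and "d \<in> A"
    and "strict_mono m"
    and "(\<lambda>n. real (card {i. i < m n \<and> x i = c \<and> y i = d}) / real (m n)) \<longlonglongrightarrow> L"
    and "(\<lambda>n. real (card {i. i < m n \<and> x i = c' \<and> y i = d}) / real (m n)) \<longlonglongrightarrow> L'"
    and "L \<noteq> L'"
  shows "rho A x y < 1"
proof (cases "L' < L")
  case True
  then show ?thesis using rho_less_1_if_score_gap[of A c c' x y m d L L'] assms by blast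
next
  case False
  then have "L < L'" using \<open>L \<noteq> L'\<close> by simp
  then show ?thesis using rho_less_1_if_score_gap[of A c' c x y m d L' L] assms by blast
qed

end
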